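(* Let $X=x_1x_2\dots$ and $Y=y_1y_2\dots$ be independent i.i.d. sequences uniform on $\{B,b,R,r\}$. Then almost surely, for every $r\ge0$ the combinatorial ball of radius $r$ around the root of $T_+(x_1\dots x_m)\cup T_-(y_1\dots y_m)$ does not depend on $m$ for all sufficiently large $m$; consequently the limit triangulation $T_+(X)\cup T_-(Y)$ is well defined and locally finite, and it has exactly one end.
   Context: Necklace construction (Sheffield). Given a finite word $X=x_1\dots x_n$ in $\{B,b,R,r\}$, build inductively disc triangulations $D_0\subset\dots\subset D_n$ in the closed upper half-plane with blue/red vertices and an active edge with blue endpoint $b_j$ and red endpoint $r_j$; initially non-positive integers are blue, positive integers red, $b_0=0,r_0=1$. Step according to $x_{j+1}$: (B) new blue vertex $b_{j+1}$, triangle $(b_j,r_j,b_{j+1})$, $r_{j+1}=r_j$; (R) new red vertex $r_{j+1}$, triangle $(b_j,r_j,r_{j+1})$, $b_{j+1}=b_j$; (b) $b_{j+1}$ = counterclockwise boundary neighbour of $b_j$ (or $m-1$, adding edge $[m-1,m]$, if $b_j=m\in\mathbb Z$), triangle $(b_{j+1},b_j,r_j)$, $r_{j+1}=r_j$; (r) $r_{j+1}$ = clockwise boundary neighbour of $r_j$ (or $m+1$, adding $[m,m+1]$, if $r_j=m\in\mathbb Z$), triangle $(b_j,r_j,r_{j+1})$, $b_{j+1}=b_j$. $T_+(X)$ is $D_n$ rooted at the first triangle constructed; $T_-(Y)$ is the analogous construction in the lower half-plane; $T_+(\cdot)\cup T_-(\cdot)$ denotes the two pieces glued along the real line, rooted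 at the root of the upper piece. Combinatorial balls: $B_0$ is the root vertex, $B_{r+1}$ is all triangles incident to a vertex of $B_r$ with their vertices and edges. A triangulation has one end if the complement of every finite subgraph has exactly one infinite connected component. *)

theory Defs
  imports "HOL-Probability.Probability"
begin

datatype letter = LB | Lb | LR | Lr
  (* LB = B (new blue), Lb = b (blue boundary move), LR = R (new red), Lr = r (red boundary move) *)

text \<open>Vertices: integers on the real line (Z m), new vertices of the upper piece
  (U j, created at step j), new vertices of the lower piece (D j, created at step j).\<close>
datatype vtx = Z int | U nat | D nat

text \<open>State of the construction: the boundary arc of the current disc is encoded by
  two stacks.  Blue side: leftmost real vertex L and the list of new (non-real)
  blue vertices on the arc above it (top = head); red side: rightmost real vertex R
  and list of new red vertices on the arc.  The active edge joins the tops.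
  The last component is the list of triangles in order of construction.\<close>
type_synonym nstate = "int \<times> vtx list \<times> int \<times> vtx list \<times> (vtx \<times> vtx \<times> vtx) list"

definition top_of :: "int \<Rightarrow> vtx list \<Rightarrow> vtx" where
  "top_of m vs = (if vs = [] then Z m else hd vs)"

fun step :: "(nat \<Rightarrow> vtx) \<Rightarrow> nat \<Rightarrow> letter \<Rightarrow> nstate \<Rightarrow> nstate" where
  "step mk j x (L, bs, R, rs, ts) =
    (let b = top_of L bs; r = top_of R rs; v = mk (Suc j) in
     case x of
       LB \<Rightarrow> (L, v # bs, R, rs, ts @ [(b, r, v)])
     | LR \<Rightarrow> (L, bs, R, v # rs, ts @ [(b, r, v)])
     | Lb \<Rightarrow> (let L' = (if bs = [] then L - 1 else L); bs' = tl bs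
              in (L', bs', R, rs, ts @ [(top_of L' bs', b, r)]))
     | Lr \<Rightarrow> (let R' = (if rs = [] then R + 1 else R); rs' = tl rs
              in (L, bs, R', rs', ts @ [(b, r, top_of R' rs')])))"

text \<open>State after the first n letters w 0, ..., w (n-1) (i.e. x_1 ... x_n).\<close>
fun nstate :: "(nat \<Rightarrow> vtx) \<Rightarrow> (nat \<Rightarrow> letter) \<Rightarrow> nat \<Rightarrow> nstate" where
  "nstate mk w 0 = (0, [], 1, [], [])"
| "nstate mk w (Suc n) = step mk n (w n) (nstate mk w n)"

definition tris_of :: "nstate \<Rightarrow> (vtx \<times> vtx \<times> vtx) list" where
  "tris_of s = snd (snd (snd (snd s)))"

text \<open>A triangle is identified by (upper piece?, index of construction step) and carries
  its three vertices.\<close>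
type_synonym tri = "(bool \<times> nat) \<times> (vtx \<times> vtx \<times> vtx)"

fun tverts :: "tri \<Rightarrow> vtx set" where
  "tverts (_, (a, b, c)) = {a, b, c}"

text \<open>T_+(x_1..x_m) \<union> T_-(y_1..y_m), glued along the real line (shared vertices Z m).\<close>
definition glued :: "(nat \<Rightarrow> letter) \<Rightarrow> (nat \<Rightarrow> letter) \<Rightarrow> nat \<Rightarrow> tri set" where
  "glued X Y m =
     {((True, j), tris_of (nstate U X m) ! j) | j. j < m} \<union>
     {((False, j), tris_of (nstate D Y m) ! j) | j. j < m}"

definition glued_lim :: "(nat \<Rightarrow> letter) \<Rightarrow> (nat \<Rightarrow> letter) \<Rightarrow> tri set" where
  "glued_lim X Y = (\<Union>m. glued X Y m)"

definition root_vtx :: vtx where "root_vtx = Z 0"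

fun comb_ball :: "tri set \<Rightarrow> nat \<Rightarrow> vtx set \<times> tri set" where
  "comb_ball T 0 = ({root_vtx}, {})"
| "comb_ball T (Suc r) =
    (let Ts = {t \<in> T. tverts t \<inter> fst (comb_ball T r) \<noteq> {}} in (\<Union> (tverts ` Ts), Ts))"

definition locally_finite :: "tri set \<Rightarrow> bool" where
  "locally_finite T \<longleftrightarrow> (\<forall>v. finite {t \<in> T. v \<in> tverts t})"

definition tri_vertices :: "tri set \<Rightarrow> vtx set" where
  "tri_vertices T = \<Union> (tverts ` T)"

definition tri_adj :: "tri set \<Rightarrow> vtx rel" where
  "tri_adj T = {(u, v). u \<noteq> v \<and> (\<exists>t\<in>T. u \<in> tverts t \<and> v \<in> tverts t)}"

definition components_minus :: "tri set \<Rightarrow> vtx set \<Rightarrow> vtx set set" where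
  "components_minus T K =
     (let S = tri_vertices T - K in {(Restr (tri_adj T) S)\<^sup>* `` {v} | v. v \<in> S})"

definition one_ended :: "tri set \<Rightarrow> bool" where
  "one_ended T \<longleftrightarrow>
     (\<forall>K. finite K \<longrightarrow> (\<exists>!C. C \<in> components_minus T K \<and> infinite C))"

definition unif4 :: "letter measure" where
  "unif4 = measure_pmf (pmf_of_set {LB, Lb, LR, Lr})"

end

theory Submission
  imports Defs
begin

text \<open>
  During the construction the boundary of the disc D_n is an arc consisting of a
  blue side and a red side.  Each side is a stack of non-real vertices sitting on one real
  vertex: the letter B (resp. R) pushes a new vertex, b (resp. r) pops one, and a pop on an
  empty stack moves the real vertex one step outwards.  A triangle is only ever attached to the
  current arc, so a vertex that has left the arc for good is incident to finitely many triangles.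

  For a uniform random word, the walk counting pushes minus pops on each side is a symmetric
  random walk; it drifts to minus infinity almost surely (Kolmogorov's 0-1 law, a symmetry
  argument and long runs of equal letters).  Then the real vertex of each side moves out without
  bound, which forces every vertex off the arc.  This gives local finiteness, hence finite balls,
  hence stabilisation of the balls.  For one-endedness, the late arcs avoid any finite set K, are
  connected paths, consecutive arcs share a triangle, and the upper and lower pieces meet on the
  real line; so all late arc vertices form one infinite component, and the remaining vertices
  form a finite set.
\<close>

section \<open>The two boundary stacks of the construction\<close>

fun side :: "letter \<Rightarrow> letter \<Rightarrow> (nat \<Rightarrow> vtx) \<Rightarrow> (nat \<Rightarrow> letter) \<Rightarrow> nat \<Rightarrow> nat \<times> vtx list" where
  "side p q mk w 0 = (0, [])"
| "side p q mk w (Suc n) =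
    (case side p q mk w n of (k, vs) \<Rightarrow>
       if w n = p then (k, mk (Suc n) # vs)
       else if w n = q then (if vs = [] then (Suc k, []) else (k, tl vs))
       else (k, vs))"

definition depth :: "letter \<Rightarrow> letter \<Rightarrow> (nat \<Rightarrow> vtx) \<Rightarrow> (nat \<Rightarrow> letter) \<Rightarrow> nat \<Rightarrow> nat" where
  "depth p q mk w n = fst (side p q mk w n)"

definition stack :: "letter \<Rightarrow> letter \<Rightarrow> (nat \<Rightarrow> vtx) \<Rightarrow> (nat \<Rightarrow> letter) \<Rightarrow> nat \<Rightarrow> vtx list" where
  "stack p q mk w n = snd (side p q mk w n)"

lemma depth_0 [simp]: "depth p q mk w 0 = 0"
  and stack_0 [simp]: "stack p q mk w 0 = []"
  by (simp_all add: depth_def stack_def)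

lemma depth_Suc:
  "depth p q mk w (Suc n) =
     (if w n \<noteq> p \<and> w n = q \<and> stack p q mk w n = [] then Suc (depth p q mk w n) else depth p q mk w n)"
  by (simp add: depth_def stack_def split: prod.split)

lemma stack_Suc:
  "stack p q mk w (Suc n) =
     (if w n = p then mk (Suc n) # stack p q mk w n
      else if w n = q then tl (stack p q mk w n) else stack p q mk w n)"
  by (simp add: depth_def stack_def split: prod.split)

lemma nstate_sides:
  "\<exists>ts. nstate mk w n = (- int (depth LB Lb mk w n), stack LB Lb mk w n,
                          1 + int (depth LR Lr mk w n), stack LR Lr mk w n, ts)"
proof (induction n)
  case (Suc n)
  then obtain ts where "nstate mk w n = (- int (depth LB Lb mk w n), stack LB Lb mk w n,
                          1 + int (depth LR Lr mk w n), stack LR Lr mk w n, ts)" ..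
  then show ?case
    by (cases "w n") (simp_all add: depth_Suc stack_Suc Let_def)
qed simp

text \<open>A side as a vertex list, from the active vertex down to the real line; the blue and
  red chains together form the boundary arc of D_n.\<close>

definition chain :: "(nat \<Rightarrow> int) \<Rightarrow> letter \<Rightarrow> letter \<Rightarrow> (nat \<Rightarrow> vtx) \<Rightarrow> (nat \<Rightarrow> letter) \<Rightarrow> nat \<Rightarrow> vtx list" where
  "chain pos p q mk w n = stack p q mk w n @ [Z (pos (depth p q mk w n))]"

abbreviation bchain :: "(nat \<Rightarrow> vtx) \<Rightarrow> (nat \<Rightarrow> letter) \<Rightarrow> nat \<Rightarrow> vtx list" where
  "bchain \<equiv> chain (\<lambda>k. - int k) LB Lb"

abbreviation rchain :: "(nat \<Rightarrow> vtx) \<Rightarrow> (nat \<Rightarrow> letter) \<Rightarrow> nat \<Rightarrow> vtx list" where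
  "rchain \<equiv> chain (\<lambda>k. 1 + int k) LR Lr"

lemma hd_chain: "hd (chain pos p q mk w n) = top_of (pos (depth p q mk w n)) (stack p q mk w n)"
  by (cases "stack p q mk w n") (simp_all add: chain_def top_of_def)

definition newtri :: "(nat \<Rightarrow> vtx) \<Rightarrow> (nat \<Rightarrow> letter) \<Rightarrow> nat \<Rightarrow> vtx \<times> vtx \<times> vtx" where
  "newtri mk w n = last (tris_of (nstate mk w (Suc n)))"

lemma tris_of_Suc: "tris_of (nstate mk w (Suc n)) = tris_of (nstate mk w n) @ [newtri mk w n]"
proof -
  obtain ts where "nstate mk w n = (- int (depth LB Lb mk w n), stack LB Lb mk w n,
                          1 + int (depth LR Lr mk w n), stack LR Lr mk w n, ts)"
    using nstate_sides by blast
  then show ?thesis by (cases "w n") (simp_all add: newtri_def tris_of_def Let_def)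
qed

lemma length_tris_of: "length (tris_of (nstate mk w n)) = n"
  by (induction n) (simp add: tris_of_def, simp del: nstate.simps add: tris_of_Suc)

lemma tris_of_nth: "j < n \<Longrightarrow> tris_of (nstate mk w n) ! j = newtri mk w j"
proof (induction n)
  case (Suc n)
  then show ?case
    by (cases "j = n") (simp_all del: nstate.simps add: tris_of_Suc nth_append length_tris_of)
qed simp

fun tv :: "vtx \<times> vtx \<times> vtx \<Rightarrow> vtx set" where
  "tv (a, b, c) = {a, b, c}"

lemma tv_newtri:
  "tv (newtri mk w n) = {hd (bchain mk w n), hd (rchain mk w n), hd (bchain mk w (Suc n)), hd (rchain mk w (Suc n))}"
proof -
  obtain ts where "nstate mk w n = (- int (depth LB Lb mk w n), stack LB Lb mk w n,
                          1 + int (depth LR Lr mk w n), stack LR Lr mk w n, ts)"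
    using nstate_sides by blast
  then show ?thesis
    by (cases "w n") (auto simp: newtri_def tris_of_def Let_def hd_chain depth_Suc stack_Suc top_of_def)
qed

section \<open>Vertices eventually leave the boundary\<close>

text \<open>A side pops more often than it pushes exactly when the walk with steps +1 (push) and
  -1 (pop) drifts to minus infinity.\<close>

definition walk :: "letter \<Rightarrow> letter \<Rightarrow> letter \<Rightarrow> int" where
  "walk p q x = (if x = p then 1 else if x = q then -1 else 0)"

definition unbounded_below :: "(nat \<Rightarrow> int) \<Rightarrow> bool" where
  "unbounded_below s \<longleftrightarrow> (\<forall>a. \<exists>n. s n < a)"

lemma depth_le_Suc: "depth p q mk w n \<le> depth p q mk w (Suc n)"
  by (simp add: depth_Suc)

lemma depth_Suc_le: "depth p q mk w (Suc n) \<le> Suc (depth p q mk w n)"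
  by (simp add: depth_Suc)

lemma depth_mono: "m \<le> n \<Longrightarrow> depth p q mk w m \<le> depth p q mk w n"
  by (induction n rule: dec_induct) (auto intro: le_trans depth_le_Suc)

lemma depth_rise_empties: "depth p q mk w n < depth p q mk w (Suc n) \<Longrightarrow> stack p q mk w (Suc n) = []"
  by (auto simp: depth_Suc stack_Suc split: if_splits)

lemma stack_since:
  "t \<le> n \<Longrightarrow> set (stack p q mk w n) \<subseteq> set (stack p q mk w t) \<union> mk ` {t<..n}"
proof (induction n rule: dec_induct)
  case (step n)
  have "set (stack p q mk w (Suc n)) \<subseteq> set (stack p q mk w n) \<union> {mk (Suc n)}"
    by (cases "stack p q mk w n") (auto simp: stack_Suc)
  moreover have "mk ` {t<..n} \<union> {mk (Suc n)} \<subseteq> mk ` {t<..Suc n}"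
    using step.hyps by auto
  ultimately show ?case using step.IH by blast
qed simp

lemma depth_minus_length:
  assumes "p \<noteq> q"
  shows "int (depth p q mk w n) - int (length (stack p q mk w n)) = - (\<Sum>k<n. walk p q (w k))"
proof (induction n)
  case (Suc n)
  then show ?case
    using assms by (cases "stack p q mk w n") (auto simp: depth_Suc stack_Suc walk_def)
qed simp

lemma depth_unbounded:
  assumes "p \<noteq> q" and "unbounded_below (\<lambda>n. \<Sum>k<n. walk p q (w k))"
  shows "\<exists>n. a < depth p q mk w n"
proof -
  obtain n where "(\<Sum>k<n. walk p q (w k)) < - int a"
    using assms(2) unfolding unbounded_below_def by blast
  with depth_minus_length[OF assms(1), of mk w n]
  have "int a < int (depth p q mk w n)" by linarith
  then show ?thesis by auto
qed

lemma exists_rise: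
  fixes f :: "nat \<Rightarrow> 'a::linorder"
  assumes "n \<le> j" and "f n < f j"
  shows "\<exists>i. n \<le> i \<and> i < j \<and> f i < f (Suc i)"
proof (rule ccontr)
  assume no_rise: "\<not> ?thesis"
  have below: "i \<le> j \<Longrightarrow> f i \<le> f n" if "n \<le> i" for i
    using that
  proof (induction i rule: dec_induct)
    case (step k)
    then have "\<not> f k < f (Suc k)" using no_rise by auto
    with step show ?case by auto
  qed simp
  from below[OF assms(1) order_refl] assms(2) show False by simp
qed

lemma discrete_ivt:
  fixes f :: "nat \<Rightarrow> nat"
  assumes steps: "\<And>i. f (Suc i) \<le> Suc (f i)" and "N \<le> m" "f N \<le> d" "d \<le> f m"
  shows "\<exists>n. N \<le> n \<and> n \<le> m \<and> f n = d"
  using assms(2-)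
proof (induction m rule: dec_induct)
  case (step m)
  show ?case
  proof (cases "d \<le> f m")
    case True
    with step show ?thesis by (meson le_SucI)
  next
    case False
    with step.prems steps[of m] have "f (Suc m) = d" by linarith
    then show ?thesis using step.hyps(1) by (intro exI[of _ "Suc m"]) auto
  qed
qed auto

text \<open>If the depth is unbounded, every vertex leaves a side for good: once the real vertex
  has moved past its old position, the stack has been emptied and refilled only with fresh
  vertices.\<close>

lemma chain_eventually_avoids:
  assumes pos: "inj pos" and mk: "inj mk" "range mk \<inter> range Z = {}"
    and deep: "\<And>a. \<exists>n. a < depth p q mk w n"
  shows "\<exists>N. \<forall>n\<ge>N. v \<notin> set (chain pos p q mk w n)"
proof (cases "\<exists>n0. v \<in> set (chain pos p q mk w n0)")
  case True
  then obtain n0 where v: "v \<in> set (chain pos p q mk w n0)" ..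
  obtain j where j: "depth p q mk w n0 < depth p q mk w j"
    using deep by blast
  then have "n0 \<le> j"
    by (meson depth_mono leD nle_le)
  with j obtain i where i: "n0 \<le> i" "depth p q mk w i < depth p q mk w (Suc i)"
    using exists_rise[of n0 j "depth p q mk w"] by blast
  have "v \<notin> set (chain pos p q mk w n)" if n: "Suc i \<le> n" for n
  proof -
    have "depth p q mk w n0 < depth p q mk w n"
      using i depth_mono[OF n, of p q mk w] depth_mono[OF i(1), of p q mk w] by linarith
    then have new_bottom: "Z (pos (depth p q mk w n)) \<noteq> Z (pos (depth p q mk w n0))"
      using pos by (auto dest: injD)
    have new_stack: "set (stack p q mk w n) \<subseteq> mk ` {Suc i<..n}"
      using stack_since[OF n, of p q mk w] depth_rise_empties[OF i(2)] by simp
    have old_stack: "set (stack p q mk w n0) \<subseteq> mk ` {0<..n0}"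
      using stack_since[of 0 n0 p q mk w] by simp
    have "mk ` {Suc i<..n} \<inter> mk ` {0<..n0} = {}"
      using i(1) mk(1) by (auto dest: injD)
    moreover have "Z x \<notin> set (stack p q mk w k)" for x k
      using stack_since[of 0 k p q mk w] mk(2) by auto
    ultimately show ?thesis using new_bottom new_stack old_stack v
      by (auto simp: chain_def)
  qed
  then show ?thesis by blast
qed simp

lemma depth_attains:
  assumes deep: "\<And>a. \<exists>n. a < depth p q mk w n" and "depth p q mk w N \<le> d"
  shows "\<exists>n\<ge>N. depth p q mk w n = d"
proof -
  obtain m where "d < depth p q mk w m" using deep by blast
  then have "d \<le> depth p q mk w (max N m)"
    using depth_mono[of m "max N m" p q mk w] by simp
  then show ?thesis
    using discrete_ivt[of "depth p q mk w" N "max N m" d] depth_Suc_le assms(2) by auto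
qed

lemma bottoms_infinite:
  assumes deep: "\<And>a. \<exists>n. a < depth LB Lb mk w n"
  shows "infinite {Z (- int (depth LB Lb mk w n)) | n. N \<le> n}"
proof
  assume "finite {Z (- int (depth LB Lb mk w n)) | n. N \<le> n}"
  moreover have "{Z (- int (depth LB Lb mk w n)) | n. N \<le> n}
      = (\<lambda>d. Z (- int d)) ` (depth LB Lb mk w ` {N..})"
    by auto
  moreover have "inj (\<lambda>d::nat. Z (- int d))"
    by (auto simp: inj_def)
  ultimately have "finite (depth LB Lb mk w ` {N..})"
    by (simp add: finite_image_iff inj_on_subset)
  then obtain a where a: "\<forall>d \<in> depth LB Lb mk w ` {N..}. d \<le> a"
    using finite_nat_set_iff_bounded_le by blast
  obtain n where "a < depth LB Lb mk w n" using deep by blast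
  moreover have "depth LB Lb mk w n \<le> depth LB Lb mk w (max N n)"
    by (rule depth_mono) simp
  moreover have "depth LB Lb mk w (max N n) \<le> a"
    using a by simp
  ultimately show False by linarith
qed

section \<open>Connectivity of the boundary arc\<close>

definition list_step :: "'a list \<Rightarrow> 'a list \<Rightarrow> bool" where
  "list_step xs ys \<longleftrightarrow> ys = xs \<or> ys = tl xs \<or> (\<exists>y. ys = [y]) \<or> (\<exists>y. ys = y # xs)"

lemma set_list_step: "list_step xs ys \<Longrightarrow> set ys \<subseteq> set xs \<union> {hd ys}"
  unfolding list_step_def by (elim disjE exE; cases xs) auto

lemma successively_list_step:
  assumes "successively P xs" and "list_step xs ys" and "xs \<noteq> [] \<Longrightarrow> P (hd ys) (hd xs)"
  shows "successively P ys"
  using assms(2) unfolding list_step_def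
proof (elim disjE)
  assume "ys = tl xs"
  then show ?thesis using assms(1) by (cases xs) (auto simp: successively_Cons)
next
  assume "\<exists>y. ys = [y]"
  then show ?thesis by auto
next
  assume "\<exists>y. ys = y # xs"
  then show ?thesis using assms(1,3) by (cases xs) (auto simp: successively_Cons)
qed (use assms(1) in simp)

lemma chain_list_step: "list_step (chain pos p q mk w n) (chain pos p q mk w (Suc n))"
  unfolding list_step_def
  by (cases "stack p q mk w n") (auto simp: chain_def depth_Suc stack_Suc)

definition joined :: "(nat \<Rightarrow> vtx) \<Rightarrow> (nat \<Rightarrow> letter) \<Rightarrow> nat \<Rightarrow> vtx \<Rightarrow> vtx \<Rightarrow> bool" where
  "joined mk w n u v \<longleftrightarrow> (\<exists>j<n. u \<in> tv (newtri mk w j) \<and> v \<in> tv (newtri mk w j))"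

lemma chain_joined:
  assumes tops: "\<And>n. {hd (chain pos p q mk w n), hd (chain pos p q mk w (Suc n))} \<subseteq> tv (newtri mk w n)"
  shows "successively (joined mk w n) (chain pos p q mk w n)"
proof (induction n)
  case (Suc n)
  have "successively (joined mk w (Suc n)) (chain pos p q mk w n)"
    using Suc.IH by (rule successively_mono) (auto simp: joined_def less_Suc_eq)
  moreover have "joined mk w (Suc n) (hd (chain pos p q mk w (Suc n))) (hd (chain pos p q mk w n))"
    using tops[of n] unfolding joined_def by blast
  ultimately show ?case
    using chain_list_step successively_list_step by metis
qed (simp add: chain_def)

lemma chains_joined:
  "successively (joined mk w n) (bchain mk w n)" "successively (joined mk w n) (rchain mk w n)"
  by (rule chain_joined; simp add: tv_newtri)+

lemma joined_sym: "joined mk w n u v \<Longrightarrow> joined mk w n v u"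
  by (auto simp: joined_def)

lemma hd_chain_in_set: "hd (chain pos p q mk w n) \<in> set (chain pos p q mk w n)"
  by (simp add: chain_def hd_append)

definition arcs :: "(nat \<Rightarrow> vtx) \<Rightarrow> (nat \<Rightarrow> letter) \<Rightarrow> nat \<Rightarrow> vtx set" where
  "arcs mk w n = set (bchain mk w n) \<union> set (rchain mk w n)"

lemma finite_arcs: "finite (arcs mk w n)"
  by (simp add: arcs_def)

lemma newtri_in_arcs: "tv (newtri mk w n) \<subseteq> arcs mk w n \<union> arcs mk w (Suc n)"
  using hd_chain_in_set unfolding tv_newtri arcs_def by blast

lemma arcs_Suc: "arcs mk w (Suc n) \<subseteq> arcs mk w n \<union> tv (newtri mk w n)"
  using set_list_step[OF chain_list_step] unfolding tv_newtri arcs_def by blast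

lemma arcs_in_triangles: "arcs mk w n \<subseteq> (\<Union>j\<le>n. tv (newtri mk w j))"
proof (induction n)
  case 0
  have "arcs mk w 0 = {hd (bchain mk w 0), hd (rchain mk w 0)}"
    by (auto simp: arcs_def chain_def)
  then show ?case unfolding tv_newtri by auto
next
  case (Suc n)
  have "(\<Union>j\<le>n. tv (newtri mk w j)) \<union> tv (newtri mk w n) \<subseteq> (\<Union>j\<le>Suc n. tv (newtri mk w j))"
    by (intro Un_least UN_mono UN_upper) auto
  with Suc.IH arcs_Suc[of mk w n] show ?case by blast
qed

lemma successively_rtrancl:
  assumes "successively (\<lambda>u v. (u, v) \<in> E\<^sup>*) xs" and "sym E" and "x \<in> set xs" "y \<in> set xs"
  shows "(x, y) \<in> E\<^sup>*"
  using assms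
proof (induction xs arbitrary: x y)
  case (Cons a xs)
  have sym: "(u, v) \<in> E\<^sup>* \<Longrightarrow> (v, u) \<in> E\<^sup>*" for u v
    using sym_rtrancl[OF \<open>sym E\<close>] by (auto dest: symD)
  show ?case
  proof (cases xs)
    case (Cons b ys)
    with Cons.prems(1) have ab: "(a, b) \<in> E\<^sup>*" and rest: "successively (\<lambda>u v. (u, v) \<in> E\<^sup>*) xs"
      by (auto simp: successively_Cons)
    have "(a, z) \<in> E\<^sup>*" if "z \<in> set xs" for z
      using ab Cons.IH[OF rest \<open>sym E\<close>, of b z] that \<open>xs = b # ys\<close> by (auto intro: rtrancl_trans)
    with Cons.prems(3,4) Cons.IH[OF rest \<open>sym E\<close>] sym show ?thesis
      by (auto intro: rtrancl_trans)
  qed (use Cons.prems in auto)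
qed simp

text \<open>For n at least 1 the boundary arc is a path in the 1-skeleton: the reversed blue
  chain, the active edge, the red chain.\<close>

lemma arcs_connected:
  assumes n: "1 \<le> n" and "sym E"
    and edges: "\<And>u v. u \<in> arcs mk w n \<Longrightarrow> v \<in> arcs mk w n \<Longrightarrow> joined mk w n u v \<Longrightarrow> (u, v) \<in> E\<^sup>*"
    and u: "u \<in> arcs mk w n" and v: "v \<in> arcs mk w n"
  shows "(u, v) \<in> E\<^sup>*"
proof -
  let ?path = "rev (bchain mk w n) @ rchain mk w n"
  have "successively (\<lambda>x y. joined mk w n y x) (bchain mk w n)"
    using chains_joined(1) by (rule successively_mono) (rule joined_sym)
  then have "successively (joined mk w n) (rev (bchain mk w n))"
    by simp
  moreover note chains_joined(2)
  moreover have "joined mk w n (hd (bchain mk w n)) (hd (rchain mk w n))"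
    using n tv_newtri[of mk w "n - 1"] unfolding joined_def by (intro exI[of _ "n - 1"]) auto
  moreover have "bchain mk w n \<noteq> []" "rchain mk w n \<noteq> []"
    by (simp_all add: chain_def)
  ultimately have path: "successively (joined mk w n) ?path"
    by (simp add: successively_append_iff last_rev)
  have path_set: "set ?path = arcs mk w n"
    by (auto simp: arcs_def)
  have "successively (\<lambda>u v. (u, v) \<in> E\<^sup>*) ?path"
    using path by (rule successively_mono) (use edges path_set in auto)
  then show ?thesis
    using \<open>sym E\<close> u v unfolding path_set[symmetric] by (rule successively_rtrancl)
qed

lemma tverts_eq_tv: "tverts (l, t) = tv t"
  by (cases t) auto

lemma finite_tverts: "finite (tverts t)"
  by (cases t) auto

lemma comb_ball_finite:
  assumes "locally_finite T"
  shows "finite (fst (comb_ball T r)) \<and> finite (snd (comb_ball T r))"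
proof (induction r)
  case (Suc r)
  let ?V = "fst (comb_ball T r)"
  have "{t \<in> T. tverts t \<inter> ?V \<noteq> {}} = (\<Union>v\<in>?V. {t \<in> T. v \<in> tverts t})"
    by auto
  then have "finite {t \<in> T. tverts t \<inter> ?V \<noteq> {}}"
    using Suc assms by (auto simp: locally_finite_def)
  then show ?case by (simp add: Let_def finite_tverts)
qed simp

lemma comb_ball_subset: "snd (comb_ball T r) \<subseteq> T"
  by (cases r) (auto simp: Let_def)

lemma comb_ball_sub_triangulation:
  assumes "T' \<subseteq> T" and "\<forall>s\<le>r. snd (comb_ball T s) \<subseteq> T'"
  shows "comb_ball T' r = comb_ball T r"
  using assms(2)
proof (induction r)
  case (Suc r)
  then have IH: "comb_ball T' r = comb_ball T r" by auto
  have "snd (comb_ball T (Suc r)) \<subseteq> T'"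
    using Suc.prems by blast
  then have "{t \<in> T. tverts t \<inter> fst (comb_ball T r) \<noteq> {}} \<subseteq> T'"
    by (simp add: Let_def)
  then have "{t \<in> T'. tverts t \<inter> fst (comb_ball T r) \<noteq> {}} = {t \<in> T. tverts t \<inter> fst (comb_ball T r) \<noteq> {}}"
    using assms(1) by auto
  then show ?case by (simp add: Let_def IH)
qed simp

lemma finite_subset_incseq_Union:
  fixes G :: "nat \<Rightarrow> 'a set"
  assumes "finite A" "A \<subseteq> (\<Union>m. G m)" "incseq G"
  shows "\<exists>M. A \<subseteq> G M"
  using assms(1,2)
proof (induction A rule: finite_induct)
  case (insert x A)
  then obtain M m where "A \<subseteq> G M" "x \<in> G m" by auto
  moreover have "G M \<subseteq> G (max M m)" "G m \<subseteq> G (max M m)"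
    using assms(3) by (simp_all add: incseq_def)
  ultimately have "insert x A \<subseteq> G (max M m)"
    by blast
  then show ?case by blast
qed simp

lemma unique_infinite_component:
  fixes T :: "tri set" and K F :: "vtx set"
  defines "S \<equiv> tri_vertices T - K" and "E \<equiv> Restr (tri_adj T) (tri_vertices T - K)"
  assumes x0: "x0 \<in> S" and infinite: "infinite (E\<^sup>* `` {x0})" and "finite F"
    and cover: "\<And>v. v \<in> S \<Longrightarrow> (x0, v) \<in> E\<^sup>* \<or> v \<in> F"
  shows "\<exists>!C. C \<in> components_minus T K \<and> infinite C"
proof -
  have comps: "components_minus T K = {E\<^sup>* `` {v} | v. v \<in> S}"
    unfolding components_minus_def Let_def S_def E_def ..
  have "sym (E\<^sup>*)"
    by (rule sym_rtrancl) (auto simp: sym_def tri_adj_def E_def)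
  then have sym: "(u, v) \<in> E\<^sup>* \<Longrightarrow> (v, u) \<in> E\<^sup>*" for u v
    by (auto dest: symD)
  have same: "E\<^sup>* `` {v} = E\<^sup>* `` {x0}" if "(x0, v) \<in> E\<^sup>*" for v
    using that sym by (auto intro: rtrancl_trans)
  have finite_other: "E\<^sup>* `` {v} \<subseteq> F" if "v \<in> S" "(x0, v) \<notin> E\<^sup>*" for v
  proof
    fix u assume "u \<in> E\<^sup>* `` {v}"
    then have vu: "(v, u) \<in> E\<^sup>*" by simp
    then have "u \<in> S"
      using \<open>v \<in> S\<close> by (induction rule: rtrancl_induct) (auto simp: E_def S_def)
    moreover have "(x0, u) \<notin> E\<^sup>*"
      using that(2) vu sym by (blast intro: rtrancl_trans)
    ultimately show "u \<in> F" using cover by blast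
  qed
  show ?thesis
  proof (rule ex1I[of _ "E\<^sup>* `` {x0}"])
    show "E\<^sup>* `` {x0} \<in> components_minus T K \<and> infinite (E\<^sup>* `` {x0})"
      using x0 infinite comps by blast
  next
    fix C assume "C \<in> components_minus T K \<and> infinite C"
    then obtain v where v: "v \<in> S" "C = E\<^sup>* `` {v}" and "infinite C"
      unfolding comps by blast
    show "C = E\<^sup>* `` {x0}"
    proof (cases "(x0, v) \<in> E\<^sup>*")
      case False
      with v finite_other have "C \<subseteq> F" by blast
      with \<open>finite F\<close> \<open>infinite C\<close> show ?thesis using finite_subset by blast
    qed (use v same in blast)
  qed
qed

section \<open>The glued triangulation for good letter sequences\<close>

lemma glued_eq:
  "glued X Y m = {((True, j), newtri U X j) | j. j < m} \<union> {((False, j), newtri D Y j) | j. j < m}"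
  unfolding glued_def by (auto simp: tris_of_nth)

lemma glued_mono: "incseq (glued X Y)"
  unfolding incseq_def glued_eq by auto

lemma glued_lim_eq:
  "glued_lim X Y = range (\<lambda>j. ((True, j), newtri U X j)) \<union> range (\<lambda>j. ((False, j), newtri D Y j))"
  unfolding glued_lim_def glued_eq by blast

lemma glued_pieces:
  "\<forall>j. \<exists>l. (l, newtri U X j) \<in> glued_lim X Y" "\<forall>j. \<exists>l. (l, newtri D Y j) \<in> glued_lim X Y"
  unfolding glued_lim_eq by blast+

lemma fresh_labels: "inj U" "range U \<inter> range Z = {}" "inj D" "range D \<inter> range Z = {}"
  by (auto simp: inj_def)

text \<open>Both walks of a letter sequence drift to minus infinity, i.e. both sides of the disc
  move outwards without bound.\<close>

definition good :: "(nat \<Rightarrow> letter) \<Rightarrow> bool" where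
  "good w \<longleftrightarrow> unbounded_below (\<lambda>n. \<Sum>k<n. walk LB Lb (w k))
             \<and> unbounded_below (\<lambda>n. \<Sum>k<n. walk LR Lr (w k))"

lemma good_depths:
  assumes "good w"
  shows "\<exists>n. a < depth LB Lb mk w n" "\<exists>n. a < depth LR Lr mk w n"
  using assms depth_unbounded unfolding good_def by auto

lemma arcs_eventually_avoid:
  assumes "inj mk" "range mk \<inter> range Z = {}" and "good w"
  shows "eventually (\<lambda>n. v \<notin> arcs mk w n) sequentially"
proof -
  have "inj (\<lambda>k::nat. - int k)" "inj (\<lambda>k::nat. 1 + int k)"
    by (auto simp: inj_def)
  then obtain N1 N2 where "\<forall>n\<ge>N1. v \<notin> set (bchain mk w n)" "\<forall>n\<ge>N2. v \<notin> set (rchain mk w n)"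
    using chain_eventually_avoids[OF _ assms(1,2)] good_depths[OF assms(3)] by meson
  then show ?thesis
    unfolding eventually_sequentially arcs_def by (intro exI[of _ "max N1 N2"]) auto
qed

lemma glued_arcs_eventually_avoid:
  assumes "good X" "good Y"
  shows "eventually (\<lambda>n. v \<notin> arcs U X n \<union> arcs D Y n) sequentially"
  using arcs_eventually_avoid[OF fresh_labels(1,2) assms(1)] arcs_eventually_avoid[OF fresh_labels(3,4) assms(2)]
  by eventually_elim simp

lemma incident_index:
  assumes "v \<in> tv (newtri mk w j)" and "\<forall>n\<ge>N. v \<notin> arcs mk w n"
  shows "j < N"
proof (rule ccontr)
  assume "\<not> j < N"
  then have "N \<le> j" "N \<le> Suc j" by auto
  with assms newtri_in_arcs[of mk w j] show False by blast
qed

lemma incident_triangles: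
  assumes "\<forall>n\<ge>N. v \<notin> arcs U X n \<union> arcs D Y n"
  shows "{t \<in> glued_lim X Y. v \<in> tverts t} \<subseteq> glued X Y N"
proof
  fix t assume t: "t \<in> {t \<in> glued_lim X Y. v \<in> tverts t}"
  then consider j where "t = ((True, j), newtri U X j)" | j where "t = ((False, j), newtri D Y j)"
    unfolding glued_lim_eq by blast
  then show "t \<in> glued X Y N"
  proof cases
    case 1
    with t assms have "j < N" by (intro incident_index[of v U X]) (auto simp: tverts_eq_tv)
    with 1 show ?thesis unfolding glued_eq by blast
  next
    case 2
    with t assms have "j < N" by (intro incident_index[of v D Y]) (auto simp: tverts_eq_tv)
    with 2 show ?thesis unfolding glued_eq by blast
  qed
qed

lemma glued_lim_locally_finite:
  assumes "good X" "good Y"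
  shows "locally_finite (glued_lim X Y)"
  unfolding locally_finite_def
proof
  fix v
  obtain N where "\<forall>n\<ge>N. v \<notin> arcs U X n \<union> arcs D Y n"
    using glued_arcs_eventually_avoid[OF assms] unfolding eventually_sequentially by blast
  from incident_triangles[OF this] show "finite {t \<in> glued_lim X Y. v \<in> tverts t}"
    by (rule finite_subset) (simp add: glued_eq)
qed

text \<open>Balls of the limit are finite, hence contained in some finite stage, which then has
  the same ball.\<close>

lemma glued_balls_stabilize:
  assumes "locally_finite (glued_lim X Y)"
  shows "\<exists>M. \<forall>m\<ge>M. comb_ball (glued X Y m) r = comb_ball (glued_lim X Y) r"
proof -
  let ?T = "glued_lim X Y"
  let ?A = "\<Union>s\<le>r. snd (comb_ball ?T s)"
  have "finite ?A"
    using comb_ball_finite[OF assms] by (intro finite_UN_I) simp_all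
  moreover have "?A \<subseteq> ?T"
    using comb_ball_subset[of ?T] by blast
  ultimately obtain M where M: "?A \<subseteq> glued X Y M"
    using finite_subset_incseq_Union[OF _ _ glued_mono] unfolding glued_lim_def by blast
  have "comb_ball (glued X Y m) r = comb_ball ?T r" if "M \<le> m" for m
  proof (rule comb_ball_sub_triangulation)
    show "glued X Y m \<subseteq> ?T" unfolding glued_lim_def by auto
    show "\<forall>s\<le>r. snd (comb_ball ?T s) \<subseteq> glued X Y m"
      using M monoD[OF glued_mono that] by auto
  qed
  then show ?thesis by blast
qed

lemma arcs_vertices:
  assumes "\<forall>j. \<exists>l. (l, newtri mk w j) \<in> T"
  shows "arcs mk w n \<subseteq> tri_vertices T"
proof -
  have "tv (newtri mk w j) \<subseteq> tri_vertices T" for j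
  proof -
    obtain l where "(l, newtri mk w j) \<in> T" using assms by blast
    then have "tverts (l, newtri mk w j) \<subseteq> tri_vertices T"
      unfolding tri_vertices_def by blast
    then show ?thesis by (simp add: tverts_eq_tv)
  qed
  with arcs_in_triangles[of mk w n] show ?thesis by blast
qed

lemma joined_rtrancl:
  assumes "\<forall>j. \<exists>l. (l, newtri mk w j) \<in> T" and "joined mk w n u v" "u \<in> S" "v \<in> S"
  shows "(u, v) \<in> (Restr (tri_adj T) S)\<^sup>*"
proof (cases "u = v")
  case False
  from assms(2) obtain j where "u \<in> tv (newtri mk w j)" "v \<in> tv (newtri mk w j)"
    unfolding joined_def by blast
  moreover obtain l where "(l, newtri mk w j) \<in> T" using assms(1) by blast
  ultimately have "(u, v) \<in> tri_adj T"
    using False unfolding tri_adj_def by (auto simp: tverts_eq_tv intro!: bexI[of _ "(l, newtri mk w j)"])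
  with assms(3,4) have "(u, v) \<in> Restr (tri_adj T) S"
    by blast
  then show ?thesis by blast
qed simp

text \<open>Once the boundary arcs avoid K, all later arcs of one piece lie in a single
  component of the graph without K: each arc is connected and consecutive active vertices share
  a triangle.\<close>

lemma piece_connected:
  assumes tris: "\<forall>j. \<exists>l. (l, newtri mk w j) \<in> T" and "1 \<le> N"
    and in_S: "\<And>n. N \<le> n \<Longrightarrow> arcs mk w n \<subseteq> S" and "N \<le> n" and u: "u \<in> arcs mk w n"
  shows "(hd (bchain mk w N), u) \<in> (Restr (tri_adj T) S)\<^sup>*"
proof -
  let ?E = "Restr (tri_adj T) S"
  have "sym ?E" by (auto simp: sym_def tri_adj_def)
  have arc: "(x, y) \<in> ?E\<^sup>*" if n: "N \<le> n" and xy: "x \<in> arcs mk w n" "y \<in> arcs mk w n" for n x y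
  proof (rule arcs_connected[OF _ \<open>sym ?E\<close> _ xy])
    show "1 \<le> n" using n \<open>1 \<le> N\<close> by simp
  next
    fix u v assume "u \<in> arcs mk w n" "v \<in> arcs mk w n" "joined mk w n u v"
    with in_S[OF n] show "(u, v) \<in> ?E\<^sup>*"
      by (intro joined_rtrancl[OF tris]) auto
  qed
  have hd_in: "hd (bchain mk w n) \<in> arcs mk w n" for n
    using hd_chain_in_set unfolding arcs_def by blast
  have "(hd (bchain mk w N), hd (bchain mk w n)) \<in> ?E\<^sup>*"
    using \<open>N \<le> n\<close>
  proof (induction n rule: dec_induct)
    case (step n)
    have "joined mk w (Suc n) (hd (bchain mk w n)) (hd (bchain mk w (Suc n)))"
      unfolding joined_def tv_newtri by blast
    moreover have "hd (bchain mk w n) \<in> S" "hd (bchain mk w (Suc n)) \<in> S"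
      using hd_in in_S step.hyps by (meson le_SucI subsetD)+
    ultimately have "(hd (bchain mk w n), hd (bchain mk w (Suc n))) \<in> ?E\<^sup>*"
      by (rule joined_rtrancl[OF tris])
    with step.IH show ?case by (rule rtrancl_trans)
  qed simp
  moreover have "(hd (bchain mk w n), u) \<in> ?E\<^sup>*"
    using arc[OF \<open>N \<le> n\<close> hd_in u] .
  ultimately show ?thesis by (rule rtrancl_trans)
qed

lemma bottom_in_arcs: "Z (- int (depth LB Lb mk w n)) \<in> arcs mk w n"
  by (simp add: arcs_def chain_def)

text \<open>Both pieces eventually pass through the same real vertex, so their late arcs lie in
  one component.\<close>

lemma glued_tail_connected:
  assumes gX: "good X" and gY: "good Y" and "1 \<le> N"
    and in_S: "\<And>n. N \<le> n \<Longrightarrow> arcs U X n \<union> arcs D Y n \<subseteq> S"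
    and "N \<le> n" and u: "u \<in> arcs U X n \<union> arcs D Y n"
  shows "(hd (bchain U X N), u) \<in> (Restr (tri_adj (glued_lim X Y)) S)\<^sup>*"
proof -
  let ?E = "Restr (tri_adj (glued_lim X Y)) S"
  have connU: "(hd (bchain U X N), v) \<in> ?E\<^sup>*" if "N \<le> k" "v \<in> arcs U X k" for k v
    using piece_connected[OF glued_pieces(1) \<open>1 \<le> N\<close> _ that] in_S by blast
  have connD: "(hd (bchain D Y N), v) \<in> ?E\<^sup>*" if "N \<le> k" "v \<in> arcs D Y k" for k v
    using piece_connected[OF glued_pieces(2) \<open>1 \<le> N\<close> _ that] in_S by blast
  define d where "d = max (depth LB Lb U X N) (depth LB Lb D Y N)"
  obtain n1 where n1: "N \<le> n1" "depth LB Lb U X n1 = d"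
    using depth_attains[OF good_depths(1)[OF gX]] unfolding d_def by (meson max.cobounded1)
  obtain n2 where n2: "N \<le> n2" "depth LB Lb D Y n2 = d"
    using depth_attains[OF good_depths(1)[OF gY]] unfolding d_def by (meson max.cobounded2)
  have "(hd (bchain U X N), Z (- int d)) \<in> ?E\<^sup>*" "(hd (bchain D Y N), Z (- int d)) \<in> ?E\<^sup>*"
    using connU[OF n1(1)] connD[OF n2(1)] bottom_in_arcs n1(2) n2(2) by metis+
  moreover have "sym (?E\<^sup>*)"
    by (rule sym_rtrancl) (auto simp: sym_def tri_adj_def)
  ultimately have "(hd (bchain U X N), hd (bchain D Y N)) \<in> ?E\<^sup>*"
    by (meson rtrancl_trans symD)
  then show ?thesis
    using u connU[OF \<open>N \<le> n\<close>] connD[OF \<open>N \<le> n\<close>] by (blast intro: rtrancl_trans)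
qed

lemma glued_vertex_in_arcs:
  assumes "v \<in> tri_vertices (glued_lim X Y)"
  shows "\<exists>k. v \<in> arcs U X k \<union> arcs D Y k"
proof -
  from assms obtain t where "t \<in> glued_lim X Y" "v \<in> tverts t"
    unfolding tri_vertices_def by blast
  then obtain j where "v \<in> tv (newtri U X j) \<or> v \<in> tv (newtri D Y j)"
    unfolding glued_lim_eq by (auto simp: tverts_eq_tv) blast+
  then show ?thesis
    using newtri_in_arcs[of U X j] newtri_in_arcs[of D Y j] by blast
qed

text \<open>Every vertex of the limit lies on some arc; the late arcs form an infinite
  component, the early arcs are finitely many vertices.\<close>

lemma glued_one_ended:
  assumes gX: "good X" and gY: "good Y"
  shows "one_ended (glued_lim X Y)"
  unfolding one_ended_def
proof (intro allI impI)
  fix K :: "vtx set" assume "finite K"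
  let ?T = "glued_lim X Y"
  define S where "S = tri_vertices ?T - K"
  define E where "E = Restr (tri_adj ?T) S"
  have "eventually (\<lambda>n. \<forall>v\<in>K. v \<notin> arcs U X n \<union> arcs D Y n) sequentially"
    using \<open>finite K\<close> glued_arcs_eventually_avoid[OF gX gY] by (simp add: eventually_ball_finite)
  then obtain N where "1 \<le> N" and avoid: "\<And>n. N \<le> n \<Longrightarrow> (arcs U X n \<union> arcs D Y n) \<inter> K = {}"
    unfolding eventually_sequentially by (metis disjoint_iff max.bounded_iff max.cobounded2)
  have in_S: "arcs U X n \<union> arcs D Y n \<subseteq> S" if "N \<le> n" for n
    using arcs_vertices[OF glued_pieces(1)] arcs_vertices[OF glued_pieces(2)] avoid[OF that]
    unfolding S_def by blast
  define x0 where "x0 = hd (bchain U X N)"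
  have conn: "(x0, u) \<in> E\<^sup>*" if "N \<le> n" "u \<in> arcs U X n \<union> arcs D Y n" for n u
    unfolding x0_def E_def using glued_tail_connected[OF gX gY \<open>1 \<le> N\<close> in_S that] by blast
  define F where "F = (\<Union>k<N. arcs U X k \<union> arcs D Y k)"
  show "\<exists>!C. C \<in> components_minus ?T K \<and> infinite C"
    unfolding S_def E_def
  proof (rule unique_infinite_component)
    show "x0 \<in> tri_vertices ?T - K"
      using in_S[of N] hd_chain_in_set unfolding x0_def S_def arcs_def by blast
    have "{Z (- int (depth LB Lb U X n)) | n. N \<le> n} \<subseteq> E\<^sup>* `` {x0}"
      using conn bottom_in_arcs by blast
    then show "infinite ((Restr (tri_adj ?T) (tri_vertices ?T - K))\<^sup>* `` {x0})"
      using bottoms_infinite[OF good_depths(1)[OF gX]] finite_subset unfolding E_def S_def by blast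
    show "finite F"
      unfolding F_def by (simp add: finite_arcs)
    fix v assume "v \<in> tri_vertices ?T - K"
    then obtain k where "v \<in> arcs U X k \<union> arcs D Y k"
      using glued_vertex_in_arcs by blast
    then show "(x0, v) \<in> (Restr (tri_adj ?T) (tri_vertices ?T - K))\<^sup>* \<or> v \<in> F"
      using conn[of k v] unfolding F_def E_def S_def by (cases "N \<le> k") auto
  qed
qed

section \<open>Random letter sequences are good almost surely\<close>

abbreviation PP :: "(nat \<Rightarrow> letter) measure" where
  "PP \<equiv> PiM UNIV (\<lambda>_::nat. unif4)"

lemma letter_UNIV: "(UNIV :: letter set) = {LB, Lb, LR, Lr}"
  using letter.exhaust by auto

lemma finite_UNIV_letter: "finite (UNIV :: letter set)"
  by (simp add: letter_UNIV)

lemma card_UNIV_letter: "card (UNIV :: letter set) = 4"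
  by (simp add: letter_UNIV)

lemma unif4_eq: "unif4 = measure_pmf (pmf_of_set UNIV)"
  by (simp add: unif4_def letter_UNIV)

lemma sets_unif4 [simp]: "sets unif4 = UNIV" and space_unif4 [simp]: "space unif4 = UNIV"
  by (simp_all add: unif4_def)

lemma prob_space_unif4: "prob_space unif4"
  by (simp add: unif4_def prob_space_measure_pmf)

interpretation PS: product_prob_space "\<lambda>_::nat. unif4" UNIV
  by (simp add: product_prob_space_def product_sigma_finite_def prob_space_imp_sigma_finite
      prob_space_unif4 product_prob_space_axioms_def)

lemma unbounded_below_tail:
  fixes s :: "nat \<Rightarrow> int"
  shows "unbounded_below s \<longleftrightarrow> (\<forall>a. \<exists>n\<ge>n0. s n < a)"
proof
  assume unb: "unbounded_below s"
  show "\<forall>a. \<exists>n\<ge>n0. s n < a"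
  proof
    fix a
    obtain n where n: "s n < min a (Min (insert a (s ` {..<n0})))"
      using unb unfolding unbounded_below_def by blast
    have "\<not> n < n0"
    proof
      assume "n < n0"
      then have "Min (insert a (s ` {..<n0})) \<le> s n" by (intro Min_le) auto
      with n show False by linarith
    qed
    with n show "\<exists>n\<ge>n0. s n < a" by (intro exI[of _ n]) auto
  qed
qed (auto simp: unbounded_below_def)

lemma unbounded_below_shift:
  fixes g :: "nat \<Rightarrow> int"
  shows "unbounded_below (\<lambda>m. \<Sum>k<m. g k) \<longleftrightarrow> unbounded_below (\<lambda>m. \<Sum>k\<in>{n0..<m}. g k)"
proof -
  define c where "c = (\<Sum>k<n0. g k)"
  have split: "(\<Sum>k<m. g k) = c + (\<Sum>k\<in>{n0..<m}. g k)" if "n0 \<le> m" for m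
    using that by (simp add: c_def lessThan_atLeast0 sum.atLeastLessThan_concat)
  have "unbounded_below (\<lambda>m. \<Sum>k<m. g k) \<longleftrightarrow> (\<forall>a. \<exists>m\<ge>n0. (\<Sum>k<m. g k) < a)"
    by (rule unbounded_below_tail)
  also have "\<dots> \<longleftrightarrow> (\<forall>a. \<exists>m\<ge>n0. c + (\<Sum>k\<in>{n0..<m}. g k) < a)"
    using split by (simp cong: conj_cong)
  also have "\<dots> \<longleftrightarrow> (\<forall>a. \<exists>m\<ge>n0. (\<Sum>k\<in>{n0..<m}. g k) < a)"
  proof (intro iffI allI)
    fix a assume "\<forall>a. \<exists>m\<ge>n0. c + (\<Sum>k\<in>{n0..<m}. g k) < a"
    then obtain m where "m \<ge> n0" "c + (\<Sum>k\<in>{n0..<m}. g k) < a + c" by blast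
    then show "\<exists>m\<ge>n0. (\<Sum>k\<in>{n0..<m}. g k) < a" by (intro exI[of _ m]) auto
  next
    fix a assume "\<forall>a. \<exists>m\<ge>n0. (\<Sum>k\<in>{n0..<m}. g k) < a"
    then obtain m where "m \<ge> n0" "(\<Sum>k\<in>{n0..<m}. g k) < a - c" by blast
    then show "\<exists>m\<ge>n0. c + (\<Sum>k\<in>{n0..<m}. g k) < a" by (intro exI[of _ m]) auto
  qed
  also have "\<dots> \<longleftrightarrow> unbounded_below (\<lambda>m. \<Sum>k\<in>{n0..<m}. g k)"
    by (rule unbounded_below_tail[symmetric])
  finally show ?thesis .
qed

definition down_event :: "(letter \<Rightarrow> int) \<Rightarrow> (nat \<Rightarrow> letter) set" where
  "down_event f = {w \<in> space PP. unbounded_below (\<lambda>m. \<Sum>k<m. f (w k))}"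

lemma unbounded_below_measurable:
  assumes coords: "\<And>k. k \<in> I \<Longrightarrow> (\<lambda>w. w k) \<in> M \<rightarrow>\<^sub>M unif4"
    and "\<And>m. g m \<subseteq> I"
  shows "{w \<in> space M. unbounded_below (\<lambda>m. \<Sum>k\<in>g m. f (w k))} \<in> sets M"
proof -
  have "(\<lambda>w. real_of_int (f (w k))) \<in> borel_measurable M" if "k \<in> I" for k
    using measurable_compose[OF coords[OF that], of "\<lambda>l. real_of_int (f l)"] by (simp add: unif4_def)
  then have "(\<lambda>w. real_of_int (\<Sum>k\<in>g m. f (w k))) \<in> borel_measurable M" for m
    unfolding of_int_sum using assms(2) by (intro borel_measurable_sum) blast
  then have "{w \<in> space M. real_of_int (\<Sum>k\<in>g m. f (w k)) < real_of_int a} \<in> sets M" for m a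
    by measurable
  then have "{w \<in> space M. (\<Sum>k\<in>g m. f (w k)) < a} \<in> sets M" for m a
    by (simp only: of_int_less_iff)
  then show ?thesis
    unfolding unbounded_below_def by measurable
qed

lemma down_event_sets: "down_event f \<in> sets PP"
  unfolding down_event_def by (rule unbounded_below_measurable[where I = UNIV]) auto

definition coord_sets :: "nat \<Rightarrow> (nat \<Rightarrow> letter) set set" where
  "coord_sets k = sigma_sets (space PP) {(\<lambda>w. w k) -` A \<inter> space PP | A. A \<in> sets unif4}"

lemma indep_coord_sets: "PS.indep_sets coord_sets UNIV"
proof -
  have "distr PP PP (\<lambda>x. \<lambda>i\<in>UNIV. x i) = PP"
    by (simp add: restrict_def)
  moreover have "PiM UNIV (\<lambda>i. distr PP unif4 (\<lambda>w. w i)) = PP"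
    by (simp add: PS.PiM_component)
  ultimately have "PS.indep_vars (\<lambda>_. unif4) (\<lambda>k w. w k) UNIV"
    by (subst PS.indep_vars_iff_distr_eq_PiM) auto
  then show ?thesis
    unfolding PS.indep_vars_def coord_sets_def by simp
qed

text \<open>The drift event is a tail event, so by Kolmogorov's zero-one law it has probability
  0 or 1.\<close>

lemma down_event_tail: "down_event f \<in> PS.tail_events coord_sets"
  unfolding PS.tail_events_def
proof
  fix n0
  let ?G = "\<Union> (coord_sets ` {n0..})"
  have "coord_sets k \<subseteq> Pow (space PP)" for k
    unfolding coord_sets_def by (auto dest: sigma_sets_into_sp[rotated])
  then have G: "?G \<subseteq> Pow (space PP)" by auto
  define M where "M = sigma (space PP) ?G"
  have space_M: "space M = space PP" and sets_M: "sets M = sigma_sets (space PP) ?G"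
    using G by (simp_all add: M_def space_measure_of_conv sets_measure_of)
  have "(\<lambda>w. w k) \<in> M \<rightarrow>\<^sub>M unif4" if "k \<in> {n0..}" for k
  proof (rule measurableI)
    fix A :: "letter set"
    have "(\<lambda>w. w k) -` A \<inter> space PP \<in> coord_sets k"
      unfolding coord_sets_def by (rule sigma_sets.Basic) auto
    then show "(\<lambda>w. w k) -` A \<inter> space M \<in> sets M"
      unfolding space_M sets_M using that by blast
  qed simp
  then have "{w \<in> space M. unbounded_below (\<lambda>m. \<Sum>k\<in>{n0..<m}. f (w k))} \<in> sets M"
    by (rule unbounded_below_measurable[where I = "{n0..}"]) auto
  moreover have "{w \<in> space M. unbounded_below (\<lambda>m. \<Sum>k\<in>{n0..<m}. f (w k))} = down_event f"
    unfolding space_M down_event_def unbounded_below_shift[of _ n0] ..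
  ultimately show "down_event f \<in> sigma_sets (space PP) ?G"
    using sets_M by simp
qed

lemma down_event_0_1: "PS.prob (down_event f) = 0 \<or> PS.prob (down_event f) = 1"
proof (rule PS.kolmogorov_0_1_law[OF _ indep_coord_sets down_event_tail])
  show "sigma_algebra (space PP) (coord_sets k)" for k
    unfolding coord_sets_def by (rule sigma_algebra_sigma_sets) auto
qed

text \<open>Applying an involution of the alphabet to every letter preserves the product
  measure, which makes the drift to minus and to plus infinity equally likely.\<close>

lemma letterwise_measurable: "(\<lambda>w i. \<sigma> (w i)) \<in> PP \<rightarrow>\<^sub>M PP"
proof (rule measurable_PiM_single')
  fix i :: nat
  have "\<sigma> \<in> unif4 \<rightarrow>\<^sub>M unif4" by (simp add: unif4_def)
  then show "(\<lambda>w. \<sigma> (w i)) \<in> PP \<rightarrow>\<^sub>M unif4"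
    by (rule measurable_compose[rotated]) simp
qed (auto simp: space_PiM)

lemma emeasure_unif4_involution:
  assumes inv: "\<And>x. \<sigma> (\<sigma> x) = x"
  shows "emeasure unif4 (\<sigma> -` A) = emeasure unif4 A"
proof -
  have "inj \<sigma>" by (metis inv injI)
  moreover have "\<sigma> -` A = \<sigma> ` A"
    using inv by (auto simp: image_def) (metis inv)
  ultimately have "card (\<sigma> -` A) = card A"
    by (simp add: card_image inj_on_subset)
  then show ?thesis unfolding unif4_eq
    by (subst (1 2) emeasure_pmf_of_set) (auto simp: finite_UNIV_letter)
qed

lemma distr_letterwise_involution:
  assumes inv: "\<And>x. \<sigma> (\<sigma> x) = x"
  shows "distr PP PP (\<lambda>w i. \<sigma> (w i)) = PP"
proof (rule PS.PiM_eq)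
  fix J :: "nat set" and F assume J: "finite J" "J \<subseteq> UNIV" and "\<And>j. j \<in> J \<Longrightarrow> F j \<in> sets unif4"
  have pre: "(\<lambda>w i. \<sigma> (w i)) -` prod_emb UNIV (\<lambda>_. unif4) J (Pi\<^sub>E J F) \<inter> space PP
      = prod_emb UNIV (\<lambda>_. unif4) J (Pi\<^sub>E J (\<lambda>j. \<sigma> -` F j))"
    by (auto simp: prod_emb_def space_PiM PiE_def Pi_def extensional_def)
  have "emeasure (distr PP PP (\<lambda>w i. \<sigma> (w i))) (prod_emb UNIV (\<lambda>_. unif4) J (Pi\<^sub>E J F))
      = emeasure PP ((\<lambda>w i. \<sigma> (w i)) -` prod_emb UNIV (\<lambda>_. unif4) J (Pi\<^sub>E J F) \<inter> space PP)"
    by (rule emeasure_distr[OF letterwise_measurable]) (auto intro!: sets_PiM_I_finite J)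
  also have "\<dots> = (\<Prod>j\<in>J. emeasure unif4 (\<sigma> -` F j))"
    unfolding pre by (rule PS.emeasure_PiM_emb) (auto simp: J)
  also have "\<dots> = (\<Prod>j\<in>J. emeasure unif4 (F j))"
    using emeasure_unif4_involution[OF inv] by simp
  finally show "emeasure (distr PP PP (\<lambda>w i. \<sigma> (w i))) (prod_emb UNIV (\<lambda>_. unif4) J (Pi\<^sub>E J F))
      = (\<Prod>j\<in>J. emeasure unif4 (F j))" .
qed simp

lemma down_event_involution:
  assumes inv: "\<And>x. \<sigma> (\<sigma> x) = x"
  shows "measure PP (down_event f) = measure PP (down_event (\<lambda>x. f (\<sigma> x)))"
proof -
  have "measure PP (down_event f) = measure (distr PP PP (\<lambda>w i. \<sigma> (w i))) (down_event f)"
    using distr_letterwise_involution[OF inv] by simp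
  also have "\<dots> = measure PP ((\<lambda>w i. \<sigma> (w i)) -` down_event f \<inter> space PP)"
    by (rule measure_distr[OF letterwise_measurable down_event_sets])
  also have "(\<lambda>w i. \<sigma> (w i)) -` down_event f \<inter> space PP = down_event (\<lambda>x. f (\<sigma> x))"
    by (auto simp: down_event_def space_PiM)
  finally show ?thesis .
qed

text \<open>Runs: the k-th block of length l consists of the letter p only.  Runs in disjoint
  blocks are independent events of positive probability, so almost surely one of them
  occurs.\<close>

definition block :: "nat \<Rightarrow> nat \<Rightarrow> nat set" where
  "block l k = {k * l..<k * l + l}"

definition run_event :: "letter \<Rightarrow> nat \<Rightarrow> nat \<Rightarrow> (nat \<Rightarrow> letter) set" where
  "run_event p l k = {w \<in> space PP. \<forall>i\<in>block l k. w i \<in> {p}}"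

lemma cylinder_sets:
  assumes "finite B"
  shows "{w \<in> space PP. \<forall>i\<in>B. w i \<in> {p}} \<in> sets PP"
proof (rule sets.sets_Collect_finite_All[OF _ assms])
  fix i
  have "(\<lambda>w. w i) -` {p} \<inter> space PP \<in> sets PP"
    by (rule measurable_sets[where A = unif4]) simp_all
  then show "{w \<in> space PP. w i \<in> {p}} \<in> sets PP"
    by (simp add: vimage_def Int_def conj_commute)
qed

lemma measure_cylinder:
  assumes "finite B"
  shows "measure PP {w \<in> space PP. \<forall>i\<in>B. w i \<in> {p}} = (1/4) ^ card B"
proof -
  have "emeasure unif4 {p} = ennreal (1/4)"
    unfolding unif4_eq by (subst emeasure_pmf_of_set) (auto simp: finite_UNIV_letter card_UNIV_letter)
  moreover have "emeasure PP {w \<in> space PP. \<forall>i\<in>B. w i \<in> {p}} = (\<Prod>i\<in>B. emeasure unif4 {p})"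
    using PS.emeasure_PiM_Collect[of B "\<lambda>_. {p}"] assms by simp
  ultimately have "emeasure PP {w \<in> space PP. \<forall>i\<in>B. w i \<in> {p}} = ennreal ((1/4) ^ card B)"
    by (simp add: ennreal_power)
  then show ?thesis by (simp add: measure_def)
qed

lemma run_event_sets: "run_event p l k \<in> sets PP"
  unfolding run_event_def block_def by (rule cylinder_sets) simp

lemma measure_run_event: "measure PP (run_event p l k) = (1/4) ^ l"
  unfolding run_event_def block_def by (subst measure_cylinder) auto

lemma disjoint_blocks: "j \<noteq> j' \<Longrightarrow> block l j \<inter> block l j' = {}"
proof -
  have "block l a \<inter> block l b = {}" if "a < b" for a b
  proof -
    have "Suc a * l \<le> b * l" using that by (intro mult_le_mono1) simp
    then show ?thesis by (auto simp: block_def)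
  qed
  then show "j \<noteq> j' \<Longrightarrow> block l j \<inter> block l j' = {}"
    by (metis inf_commute linorder_neqE_nat)
qed

lemma indep_run_events: "PS.indep_events (run_event p l) UNIV"
  unfolding PS.indep_events_def
proof (intro conjI allI impI)
  show "run_event p l ` UNIV \<subseteq> sets PP" using run_event_sets by auto
next
  fix J :: "nat set" assume J: "J \<subseteq> UNIV" "J \<noteq> {}" "finite J"
  have inter: "(\<Inter>j\<in>J. run_event p l j) = {w \<in> space PP. \<forall>i\<in>(\<Union>j\<in>J. block l j). w i \<in> {p}}"
    using J(2) by (auto simp: run_event_def)
  have "\<forall>i\<in>J. \<forall>j\<in>J. i \<noteq> j \<longrightarrow> block l i \<inter> block l j = {}"
    using disjoint_blocks by blast
  moreover have "\<forall>j\<in>J. finite (block l j)"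
    by (simp add: block_def)
  ultimately have "card (\<Union>j\<in>J. block l j) = (\<Sum>j\<in>J. card (block l j))"
    using card_UN_disjoint[OF J(3)] by blast
  then have "card (\<Union>j\<in>J. block l j) = card J * l"
    by (simp add: block_def)
  then have "measure PP (\<Inter>j\<in>J. run_event p l j) = (1/4) ^ (card J * l)"
    unfolding inter using J(3) by (subst measure_cylinder) (auto simp: block_def)
  also have "\<dots> = (\<Prod>j\<in>J. measure PP (run_event p l j))"
    by (simp add: measure_run_event power_mult[symmetric] mult.commute)
  finally show "measure PP (\<Inter>j\<in>J. run_event p l j) = (\<Prod>j\<in>J. measure PP (run_event p l j))" .
qed

lemma no_run_null: "(\<Inter>k. space PP - run_event p l k) \<in> null_sets PP"
proof -
  let ?N = "\<Inter>k. space PP - run_event p l k"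
  let ?q = "1 - (1/4::real) ^ l"
  have N_sets: "?N \<in> sets PP" using run_event_sets by blast
  have indep: "PS.indep_sets (\<lambda>k. sigma_sets (space PP) {run_event p l k}) UNIV"
    by (rule PS.indep_sets_sigma)
       (use indep_run_events[of p l] in \<open>auto simp: PS.indep_events_def_alt Int_stable_def\<close>)
  have "measure PP ?N \<le> ?q ^ K" for K
  proof -
    have "measure PP ?N \<le> measure PP (\<Inter>k\<in>{..<Suc K}. space PP - run_event p l k)"
      using run_event_sets by (intro PS.finite_measure_mono) auto
    also have "\<dots> = (\<Prod>k\<in>{..<Suc K}. measure PP (space PP - run_event p l k))"
      by (rule PS.indep_setsD[OF indep]) (auto intro: sigma_sets.Compl sigma_sets.Basic)
    also have "\<dots> = ?q ^ Suc K"
      using PS.prob_compl[OF run_event_sets] by (simp add: measure_run_event)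
    also have "\<dots> \<le> ?q ^ K"
      by (rule power_decreasing) (simp_all add: power_le_one)
    finally show ?thesis .
  qed
  moreover have "(\<lambda>K. ?q ^ K) \<longlonglongrightarrow> 0"
  proof (rule LIMSEQ_power_zero)
    have "0 < (1/4::real) ^ l" "(1/4::real) ^ l \<le> 1"
      by (simp_all add: power_le_one)
    then show "norm ?q < 1" by simp
  qed
  ultimately have "measure PP ?N \<le> 0"
    by (intro LIMSEQ_le_const[of "\<lambda>K. ?q ^ K"]) auto
  then have "measure PP ?N = 0"
    using measure_nonneg[of PP ?N] by linarith
  then show ?thesis
    using N_sets by (simp add: PS.emeasure_eq_measure null_sets_def)
qed

lemma bounded_walk_no_run:
  assumes fp: "f p = 1" and bounded: "\<forall>m. \<bar>\<Sum>k<m. f (w k)\<bar> \<le> int c"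
  shows "w \<notin> run_event p (2 * c + 1) k"
proof
  let ?a = "k * (2 * c + 1)" and ?l = "2 * c + 1"
  assume "w \<in> run_event p ?l k"
  then have run: "w i = p" if "i \<in> {?a..<?a + ?l}" for i
    using that by (simp add: run_event_def block_def)
  have "(\<Sum>i\<in>{?a..<?a + ?l}. f (w i)) = (\<Sum>i\<in>{?a..<?a + ?l}. 1)"
    by (rule sum.cong) (simp_all add: run fp)
  then have "(\<Sum>i\<in>{?a..<?a + ?l}. f (w i)) = int ?l"
    by simp
  moreover have "(\<Sum>i\<in>{0..<?a}. f (w i)) + (\<Sum>i\<in>{?a..<?a + ?l}. f (w i)) = (\<Sum>i\<in>{0..<?a + ?l}. f (w i))"
    by (rule sum.atLeastLessThan_concat) simp_all
  ultimately have "(\<Sum>i<?a + ?l. f (w i)) = (\<Sum>i<?a. f (w i)) + int ?l"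
    by (simp only: lessThan_atLeast0)
  with bounded[rule_format, of "?a + ?l"] bounded[rule_format, of ?a] show False
    by linarith
qed

lemma AE_unbounded_walk:
  assumes fp: "f p = 1"
  shows "AE w in PP. w \<in> down_event f \<or> w \<in> down_event (\<lambda>x. - f x)"
proof (rule AE_I')
  show "(\<Union>c. \<Inter>k. space PP - run_event p (2 * c + 1) k) \<in> null_sets PP"
    using no_run_null by blast
  show "{w \<in> space PP. \<not> (w \<in> down_event f \<or> w \<in> down_event (\<lambda>x. - f x))}
      \<subseteq> (\<Union>c. \<Inter>k. space PP - run_event p (2 * c + 1) k)"
  proof
    fix w assume w: "w \<in> {w \<in> space PP. \<not> (w \<in> down_event f \<or> w \<in> down_event (\<lambda>x. - f x))}"
    then obtain a b where a: "\<forall>m. a \<le> (\<Sum>k<m. f (w k))" and b: "\<forall>m. b \<le> (\<Sum>k<m. - f (w k))"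
      by (auto simp: down_event_def unbounded_below_def not_less)
    define c where "c = nat (\<bar>a\<bar> + \<bar>b\<bar>)"
    have "\<forall>m. \<bar>\<Sum>k<m. f (w k)\<bar> \<le> int c"
    proof
      fix m
      have "b \<le> - (\<Sum>k<m. f (w k))"
        using b[rule_format, of m] by (simp add: sum_negf)
      then show "\<bar>\<Sum>k<m. f (w k)\<bar> \<le> int c"
        using a[rule_format, of m] by (simp add: c_def)
    qed
    then have "w \<in> (\<Inter>k. space PP - run_event p (2 * c + 1) k)"
      using bounded_walk_no_run[of f p, OF fp] w by auto
    then show "w \<in> (\<Union>c. \<Inter>k. space PP - run_event p (2 * c + 1) k)"
      by blast
  qed
qed

text \<open>By symmetry both alternatives have the same probability, which is therefore
  1.\<close>

lemma AE_down_event: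
  assumes fp: "f p = 1" and inv: "\<And>x. \<sigma> (\<sigma> x) = x" and anti: "\<And>x. f (\<sigma> x) = - f x"
  shows "AE w in PP. w \<in> down_event f"
proof -
  let ?t = "measure PP (down_event f)"
  have sym: "measure PP (down_event (\<lambda>x. - f x)) = ?t"
    using down_event_involution[OF inv, of f] anti by simp
  have "down_event f \<union> down_event (\<lambda>x. - f x) \<in> sets PP"
    using down_event_sets by blast
  then have "measure PP (down_event f \<union> down_event (\<lambda>x. - f x)) = 1"
    using AE_unbounded_walk[of f p, OF fp] PS.prob_eq_1 by simp
  moreover have "measure PP (down_event f \<union> down_event (\<lambda>x. - f x))
      \<le> ?t + measure PP (down_event (\<lambda>x. - f x))"
    by (rule measure_Un_le) (rule down_event_sets)+
  ultimately have "?t \<noteq> 0"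
    using sym by linarith
  then have "?t = 1"
    using down_event_0_1[of f] by simp
  then show ?thesis
    using PS.prob_eq_1[OF down_event_sets] by simp
qed

lemma AE_walk_unbounded_below:
  assumes "p \<noteq> q"
  shows "AE w in PP. unbounded_below (\<lambda>n. \<Sum>k<n. walk p q (w k))"
proof -
  let ?\<sigma> = "\<lambda>x. if x = p then q else if x = q then p else x"
  have "AE w in PP. w \<in> down_event (walk p q)"
    by (rule AE_down_event[of _ p ?\<sigma>]) (use assms in \<open>auto simp: walk_def\<close>)
  then show ?thesis
    by (rule AE_mp) (auto simp: down_event_def)
qed

lemma AE_good: "AE w in PP. good w"
proof -
  have "AE w in PP. unbounded_below (\<lambda>n. \<Sum>k<n. walk LB Lb (w k))"
       "AE w in PP. unbounded_below (\<lambda>n. \<Sum>k<n. walk LR Lr (w k))"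
    by (rule AE_walk_unbounded_below, simp)+
  then show ?thesis
    by eventually_elim (simp add: good_def)
qed

lemma (in sigma_finite_measure) AE_pair_fst:
  assumes "AE x in N. P x"
  shows "AE z in N \<Otimes>\<^sub>M M. P (fst z)"
proof -
  from assms obtain A where A: "A \<in> null_sets N" "{x \<in> space N. \<not> P x} \<subseteq> A"
    unfolding eventually_ae_filter by blast
  then have "A \<times> space M \<in> null_sets (N \<Otimes>\<^sub>M M)"
    by (intro times_in_null_sets1) auto
  then show ?thesis
    by (rule AE_I') (use A in \<open>auto simp: space_pair_measure\<close>)
qed

lemma (in sigma_finite_measure) AE_pair_snd:
  assumes "AE y in M. P y"
  shows "AE z in N \<Otimes>\<^sub>M M. P (snd z)"
proof -
  from assms obtain B where B: "B \<in> null_sets M" "{y \<in> space M. \<not> P y} \<subseteq> B"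
    unfolding eventually_ae_filter by blast
  then have "space N \<times> B \<in> null_sets (N \<Otimes>\<^sub>M M)"
    by (intro times_in_null_sets2) auto
  then show ?thesis
    by (rule AE_I') (use B in \<open>auto simp: space_pair_measure\<close>)
qed

theorem mainTheorem14:
  shows "AE \<omega> in (PiM UNIV (\<lambda>_::nat. unif4)) \<Otimes>\<^sub>M (PiM UNIV (\<lambda>_::nat. unif4)).
     (\<forall>r. \<exists>M. \<forall>m\<ge>M. comb_ball (glued (fst \<omega>) (snd \<omega>) m) r = comb_ball (glued (fst \<omega>) (snd \<omega>) M) r
                     \<and> comb_ball (glued (fst \<omega>) (snd \<omega>) m) r = comb_ball (glued_lim (fst \<omega>) (snd \<omega>)) r)
     \<and> locally_finite (glued_lim (fst \<omega>) (snd \<omega>))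
     \<and> one_ended (glued_lim (fst \<omega>) (snd \<omega>))"
proof -
  have "AE \<omega> in PP \<Otimes>\<^sub>M PP. good (fst \<omega>) \<and> good (snd \<omega>)"
    using PS.P.AE_pair_fst[OF AE_good] PS.P.AE_pair_snd[OF AE_good] by eventually_elim simp
  then show ?thesis
  proof (rule AE_mp, intro AE_I2 impI conjI allI)
    fix \<omega> r assume good: "good (fst \<omega>) \<and> good (snd \<omega>)"
    then show lf: "locally_finite (glued_lim (fst \<omega>) (snd \<omega>))"
      by (simp add: glued_lim_locally_finite)
    show "one_ended (glued_lim (fst \<omega>) (snd \<omega>))"
      using good by (simp add: glued_one_ended)
    obtain M where "\<forall>m\<ge>M. comb_ball (glued (fst \<omega>) (snd \<omega>) m) r = comb_ball (glued_lim (fst \<omega>) (snd \<omega>)) r"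
      using glued_balls_stabilize[OF lf] by blast
    then show "\<exists>M. \<forall>m\<ge>M. comb_ball (glued (fst \<omega>) (snd \<omega>) m) r = comb_ball (glued (fst \<omega>) (snd \<omega>) M) r
                     \<and> comb_ball (glued (fst \<omega>) (snd \<omega>) m) r = comb_ball (glued_lim (fst \<omega>) (snd \<omega>)) r"
      by (intro exI[of _ M]) simp
  qed
qed

end
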